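(* Let \[P=\{(x,y)\in[0,3]^3\times[0,1]^3 : x_1+x_2+x_3=4,\ x_i\le 4y_i \text{ for } i=1,2,3\},\] \[P_U=\{(x,y,z)\in\mathbb{R}^3\times\mathbb{R}^3\times[0,1]^{3\times3} : (x,y)\in P,\ x_i=z_{i1}+2z_{i2}+3z_{i3},\ z_{i1}+z_{i2}+z_{i3}\le1 \text{ for } i=1,2,3\},\] \[P_{L+}=\{(x,y,z)\in\mathbb{R}^3\times\mathbb{R}^3\times[0,1]^{3\times2} : (x,y)\in P,\ x_i=z_{i1}+2z_{i2} \text{ for } i=1,2,3\},\] where all variables ($x$, $y$ and $z$) are integer variables. Then \[\operatorname{proj}_{x,y}\big(\mathrm{SC}(P_U)\big)\subsetneq\operatorname{proj}_{x,y}\big(\mathrm{SC}(P_{L+})\big).\]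
   Context: For $X\subseteq\mathbb{R}^N$ with all coordinates integer, the split closure is $\mathrm{SC}(X)=\bigcap\mathrm{conv}(X\setminus S)$, the intersection over all split sets $S=\{w\in\mathbb{R}^N:\pi_0<\pi^Tw<\pi_0+1\}$ with $\pi\in\mathbb{Z}^N$, $\pi_0\in\mathbb{Z}$. $\operatorname{proj}_{x,y}$ is orthogonal projection onto the $(x,y)$-coordinates. *)

theory Defs
  imports "HOL-Analysis.Analysis" "HOL-Library.Numeral_Type"
begin

definition split_closure :: "(real^'n) set \<Rightarrow> (real^'n) set" where
  "split_closure X =
     (\<Inter>\<pi>\<in>{\<pi>::real^'n. \<forall>i. \<pi> $ i \<in> \<int>}. \<Inter>\<pi>0::int.
        convex hull (X - {w. of_int \<pi>0 < \<pi> \<bullet> w \<and> \<pi> \<bullet> w < of_int \<pi>0 + 1}))"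

text \<open>The elements of the numeral type 3 are written 1, 2, 3 (where 3 = 0 in that type).\<close>
definition xc :: "real^(3 + 3 + (3 \<times> 'm::finite)) \<Rightarrow> 3 \<Rightarrow> real" where
  "xc v i = v $ Inl i"
definition yc :: "real^(3 + 3 + (3 \<times> 'm::finite)) \<Rightarrow> 3 \<Rightarrow> real" where
  "yc v i = v $ Inr (Inl i)"
definition zc :: "real^(3 + 3 + (3 \<times> 'm::finite)) \<Rightarrow> 3 \<Rightarrow> 'm \<Rightarrow> real" where
  "zc v i j = v $ Inr (Inr (i, j))"

definition proj_xy :: "real^(3 + 3 + (3 \<times> 'm::finite)) \<Rightarrow> real^(3 + 3)" where
  "proj_xy v = (\<chi> k. case k of Inl i \<Rightarrow> xc v i | Inr i \<Rightarrow> yc v i)"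

definition inP :: "(3 \<Rightarrow> real) \<Rightarrow> (3 \<Rightarrow> real) \<Rightarrow> bool" where
  "inP x y \<longleftrightarrow>
     (\<forall>i. 0 \<le> x i \<and> x i \<le> 3 \<and> 0 \<le> y i \<and> y i \<le> 1 \<and> x i \<le> 4 * y i) \<and>
     x 1 + x 2 + x 3 = 4"

definition P_U :: "(real^(3 + 3 + (3 \<times> 3))) set" where
  "P_U = {v. inP (xc v) (yc v) \<and>
            (\<forall>i j. 0 \<le> zc v i j \<and> zc v i j \<le> 1) \<and>
            (\<forall>i. xc v i = zc v i 1 + 2 * zc v i 2 + 3 * zc v i 3 \<and>
                 zc v i 1 + zc v i 2 + zc v i 3 \<le> 1)}"

definition P_Lplus :: "(real^(3 + 3 + (3 \<times> 2))) set" where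
  "P_Lplus = {v. inP (xc v) (yc v) \<and>
            (\<forall>i j. 0 \<le> zc v i j \<and> zc v i j \<le> 1) \<and>
            (\<forall>i. xc v i = zc v i 1 + 2 * zc v i 2)}"

end

theory Submission
  imports Defs
begin

(* The linear map replacing (z\<^sub>i\<^sub>1, z\<^sub>i\<^sub>2, z\<^sub>i\<^sub>3) by
  (z\<^sub>i\<^sub>1 + z\<^sub>i\<^sub>3, z\<^sub>i\<^sub>2 + z\<^sub>i\<^sub>3) keeps (x, y), sends P_U into P_L+ and pulls
  integral split directions back to integral ones, so it maps SC(P_U) into SC(P_L+).

  For strictness, the splits 1 < \<Sum>z < 2 and 0 < z\<^sub>i\<^sub>1 + z\<^sub>i\<^sub>2 + z\<^sub>i\<^sub>3 - y\<^sub>i < 1 on P_U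
  give the cuts \<Sum>z \<ge> 2 and z\<^sub>i\<^sub>1 + z\<^sub>i\<^sub>2 + z\<^sub>i\<^sub>3 \<le> y\<^sub>i, hence y\<^sub>1 + y\<^sub>2 + y\<^sub>3 \<ge> 2 on SC(P_U).
  The point of P_L+ with y = (1/2, 1/2, 1/2) survives every split: it is the centre of a
  parallelepiped with integral vertex and integral edges whose facet centres lie in P_L+,
  and a split containing the centre takes a half-integral value there, so it misses both
  facet centres along any edge on which its direction is nonzero. *)

definition integral_vec :: "real^'n \<Rightarrow> bool" where
  "integral_vec v \<longleftrightarrow> (\<forall>i. v $ i \<in> \<int>)"

definition split_set :: "real^'n \<Rightarrow> int \<Rightarrow> (real^'n) set" where
  "split_set \<pi> \<pi>0 = {w. of_int \<pi>0 < \<pi> \<bullet> w \<and> \<pi> \<bullet> w < of_int \<pi>0 + 1}"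

lemma split_closure_subset_convex_hull:
  "integral_vec \<pi> \<Longrightarrow> split_closure X \<subseteq> convex hull (X - split_set \<pi> \<pi>0)"
  unfolding split_closure_def split_set_def integral_vec_def by blast

lemma split_closureI:
  "(\<And>\<pi> \<pi>0. integral_vec \<pi> \<Longrightarrow> v \<in> convex hull (X - split_set \<pi> \<pi>0)) \<Longrightarrow> v \<in> split_closure X"
  unfolding split_closure_def split_set_def integral_vec_def by blast

lemma split_closure_subset_convex:
  assumes "integral_vec \<pi>" "X - split_set \<pi> \<pi>0 \<subseteq> C" "convex C"
  shows "split_closure X \<subseteq> C"
  using split_closure_subset_convex_hull[OF assms(1)] hull_minimal[of _ C convex, OF assms(2,3)]
  by blast

lemma integral_vec_diff: "integral_vec u \<Longrightarrow> integral_vec v \<Longrightarrow> integral_vec (u - v)"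
  unfolding integral_vec_def by auto

lemma inner_integral_vec: "integral_vec \<pi> \<Longrightarrow> integral_vec u \<Longrightarrow> \<pi> \<bullet> u \<in> \<int>"
  unfolding integral_vec_def inner_vec_def inner_real_def by (auto intro!: Ints_sum Ints_mult)

lemma Ints_notin_split_set: "\<pi> \<bullet> u \<in> \<int> \<Longrightarrow> u \<notin> split_set \<pi> \<pi>0"
  unfolding split_set_def by (auto elim!: Ints_cases)

lemma half_integer_in_unit_interval:
  fixes s :: real
  assumes "2 * s \<in> \<int>" "of_int p < s" "s < of_int p + 1"
  shows "s = of_int p + 1/2"
proof -
  obtain n where n: "2 * s = of_int n" using assms(1) by (auto elim: Ints_cases)
  with assms(2,3) have "2 * p < n" "n < 2 * p + 2" by linarith+
  then have "n = 2 * p + 1" by linarith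
  with n show ?thesis by simp
qed

lemma linear_image_split_closure:
  fixes f :: "real^'n \<Rightarrow> real^'m"
  assumes "linear f" "f ` X \<subseteq> Y"
    and dual: "\<And>\<pi>. integral_vec \<pi> \<Longrightarrow> \<exists>\<pi>'. integral_vec \<pi>' \<and> (\<forall>v. \<pi> \<bullet> f v = \<pi>' \<bullet> v)"
  shows "f ` split_closure X \<subseteq> split_closure Y"
proof (clarify, rule split_closureI)
  fix v and \<pi> :: "real^'m" and \<pi>0
  assume v: "v \<in> split_closure X" and "integral_vec \<pi>"
  then obtain \<pi>' where \<pi>': "integral_vec \<pi>'" "\<And>v. \<pi> \<bullet> f v = \<pi>' \<bullet> v" using dual by blast
  have "f v \<in> f ` (convex hull (X - split_set \<pi>' \<pi>0))"
    using split_closure_subset_convex_hull[OF \<pi>'(1)] v by blast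
  also have "\<dots> = convex hull (f ` (X - split_set \<pi>' \<pi>0))"
    by (rule convex_hull_linear_image[OF assms(1)])
  also have "\<dots> \<subseteq> convex hull (Y - split_set \<pi> \<pi>0)"
    using assms(2) by (intro hull_mono) (auto simp: split_set_def \<pi>'(2))
  finally show "f v \<in> convex hull (Y - split_set \<pi> \<pi>0)" .
qed

lemma centre_mem_split_closure:
  fixes b :: "real^'n" and D :: "'i::finite \<Rightarrow> real^'n"
  assumes c: "c = b + (1/2) *\<^sub>R (\<Sum>i\<in>UNIV. D i)"
    and int: "integral_vec b" "\<And>i. integral_vec (D i)"
    and mem: "c \<in> X" "\<And>i. c - (1/2) *\<^sub>R D i \<in> X" "\<And>i. c + (1/2) *\<^sub>R D i \<in> X"
  shows "c \<in> split_closure X"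
proof (rule split_closureI)
  fix \<pi> :: "real^'n" and \<pi>0
  assume \<pi>: "integral_vec \<pi>"
  define S where "S = split_set \<pi> \<pi>0"
  show "c \<in> convex hull (X - S)"
  proof (cases "c \<in> S")
    case False
    then show ?thesis using mem(1) by (simp add: hull_inc)
  next
    case True
    have \<pi>c: "\<pi> \<bullet> c = \<pi> \<bullet> b + (\<Sum>i\<in>UNIV. \<pi> \<bullet> D i) / 2"
      unfolding c by (simp add: inner_add_right inner_sum_right)
    have kb: "\<pi> \<bullet> b \<in> \<int>" and k: "\<And>i. \<pi> \<bullet> D i \<in> \<int>"
      using inner_integral_vec \<pi> int by blast+
    have "\<exists>i. \<pi> \<bullet> D i \<noteq> 0"
    proof (rule ccontr)
      assume "\<nexists>i. \<pi> \<bullet> D i \<noteq> 0"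
      then have "\<pi> \<bullet> c = \<pi> \<bullet> b" by (simp add: \<pi>c)
      then show False using True kb Ints_notin_split_set unfolding S_def by metis
    qed
    then obtain i where ki: "\<pi> \<bullet> D i \<noteq> 0" ..
    have "2 * (\<pi> \<bullet> c) \<in> \<int>"
      using kb k by (simp add: \<pi>c Ints_sum)
    then have half: "\<pi> \<bullet> c = of_int \<pi>0 + 1/2"
      using True half_integer_in_unit_interval unfolding S_def split_set_def by blast
    have "1 \<le> \<bar>\<pi> \<bullet> D i\<bar>" using Ints_nonzero_abs_ge1 k ki by blast
    then have out: "c - (1/2) *\<^sub>R D i \<notin> S" "c + (1/2) *\<^sub>R D i \<notin> S"
      using half by (auto simp: S_def split_set_def inner_diff_right inner_add_right)
    have "(1/2) *\<^sub>R (c - (1/2) *\<^sub>R D i) + (1/2) *\<^sub>R (c + (1/2) *\<^sub>R D i) \<in> convex hull (X - S)"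
      using out mem by (intro convexD convex_convex_hull hull_inc) auto
    moreover have "(1/2) *\<^sub>R (c - (1/2) *\<^sub>R D i) + (1/2) *\<^sub>R (c + (1/2) *\<^sub>R D i) = c"
      by (simp add: vec_eq_iff field_simps)
    ultimately show ?thesis by simp
  qed
qed

lemma sum_UNIV_sum_type:
  fixes f :: "'a::finite + 'b::finite \<Rightarrow> 'c::comm_monoid_add"
  shows "(\<Sum>k\<in>UNIV. f k) = (\<Sum>i\<in>UNIV. f (Inl i)) + (\<Sum>j\<in>UNIV. f (Inr j))"
proof -
  have "(\<Sum>k\<in>UNIV. f k) = (\<Sum>k\<in>Inl ` UNIV \<union> Inr ` UNIV. f k)"
    by (simp only: UNIV_sum[symmetric])
  also have "\<dots> = (\<Sum>i\<in>UNIV. f (Inl i)) + (\<Sum>j\<in>UNIV. f (Inr j))"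
    by (subst sum.union_disjoint) (auto simp: sum.reindex)
  finally show ?thesis .
qed

lemma inner_xyz:
  fixes \<pi> v :: "real^(3 + 3 + (3 \<times> 'm::finite))"
  shows "\<pi> \<bullet> v = (\<Sum>i\<in>UNIV. xc \<pi> i * xc v i) + (\<Sum>i\<in>UNIV. yc \<pi> i * yc v i)
                 + (\<Sum>i\<in>UNIV. \<Sum>j\<in>UNIV. zc \<pi> i j * zc v i j)"
  unfolding inner_vec_def inner_real_def xc_def yc_def zc_def
  by (simp add: sum_UNIV_sum_type add.assoc sum.cartesian_product
      UNIV_Times_UNIV[symmetric] del: UNIV_Times_UNIV)

definition zsum_dir :: "real^(3 + 3 + (3 \<times> 3))" where
  "zsum_dir = (\<chi> k. case k of Inr (Inr _) \<Rightarrow> 1 | _ \<Rightarrow> 0)"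

definition zrow_minus_y_dir :: "3 \<Rightarrow> real^(3 + 3 + (3 \<times> 3))" where
  "zrow_minus_y_dir i0 = (\<chi> k. case k of
      Inr (Inl i) \<Rightarrow> (if i = i0 then -1 else 0)
    | Inr (Inr (i, _)) \<Rightarrow> (if i = i0 then 1 else 0)
    | _ \<Rightarrow> 0)"

lemma integral_zsum_dir: "integral_vec zsum_dir"
  unfolding integral_vec_def zsum_dir_def by (auto split: sum.split)

lemma integral_zrow_minus_y_dir: "integral_vec (zrow_minus_y_dir i)"
  unfolding integral_vec_def zrow_minus_y_dir_def by (simp split: sum.split prod.split)

lemma inner_zsum_dir:
  "zsum_dir \<bullet> v = (\<Sum>i\<in>UNIV. zc v i 1 + zc v i 2 + zc v i 3)"
  unfolding inner_xyz by (simp add: zsum_dir_def xc_def yc_def zc_def sum_3)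

lemma inner_zrow_minus_y_dir:
  "zrow_minus_y_dir i \<bullet> v = zc v i 1 + zc v i 2 + zc v i 3 - yc v i"
  using exhaust_3[of i]
  by (auto simp: inner_xyz zrow_minus_y_dir_def xc_def yc_def zc_def sum_3)

lemma P_U_zsum_gt_1:
  assumes "v \<in> P_U"
  shows "1 < (\<Sum>i\<in>UNIV. zc v i 1 + zc v i 2 + zc v i 3)"
proof -
  have x: "xc v i = zc v i 1 + 2 * zc v i 2 + 3 * zc v i 3" and z: "0 \<le> zc v i j" for i j
    using assms unfolding P_U_def by blast+
  have "4 = (\<Sum>i\<in>UNIV. xc v i)"
    using assms unfolding P_U_def inP_def sum_3 by (blast intro: sym)
  also have "\<dots> \<le> 3 * (\<Sum>i\<in>UNIV. zc v i 1 + zc v i 2 + zc v i 3)"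
    unfolding sum_distrib_left using x z[of _ 1] z[of _ 2] by (intro sum_mono) fastforce
  finally show ?thesis by simp
qed

lemma split_closure_P_U_zsum:
  assumes "v \<in> split_closure P_U"
  shows "2 \<le> (\<Sum>i\<in>UNIV. zc v i 1 + zc v i 2 + zc v i 3)"
proof -
  have "P_U - split_set zsum_dir 1 \<subseteq> {w. 2 \<le> zsum_dir \<bullet> w}"
    using P_U_zsum_gt_1 by (force simp: split_set_def inner_zsum_dir)
  from split_closure_subset_convex[OF integral_zsum_dir this convex_halfspace_ge] assms
  show ?thesis by (auto simp: inner_zsum_dir)
qed

lemma P_U_zrow_le_y:
  assumes "v \<in> P_U"
  shows "zc v i 1 + zc v i 2 + zc v i 3 - yc v i < 1"
proof -
  have "xc v i = zc v i 1 + 2 * zc v i 2 + 3 * zc v i 3" "zc v i 1 + zc v i 2 + zc v i 3 \<le> 1"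
    "0 \<le> zc v i 1" "0 \<le> zc v i 2" "0 \<le> zc v i 3" "0 \<le> yc v i" "xc v i \<le> 4 * yc v i"
    using assms unfolding P_U_def inP_def by blast+
  then show ?thesis by linarith
qed

lemma split_closure_P_U_zrow:
  assumes "v \<in> split_closure P_U"
  shows "zc v i 1 + zc v i 2 + zc v i 3 \<le> yc v i"
proof -
  have "P_U - split_set (zrow_minus_y_dir i) 0 \<subseteq> {w. zrow_minus_y_dir i \<bullet> w \<le> 0}"
    using P_U_zrow_le_y by (force simp: split_set_def inner_zrow_minus_y_dir)
  from split_closure_subset_convex[OF integral_zrow_minus_y_dir this convex_halfspace_le] assms
  show ?thesis by (auto simp: inner_zrow_minus_y_dir)
qed

lemma split_closure_P_U_ysum:
  assumes "v \<in> split_closure P_U"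
  shows "2 \<le> yc v 1 + yc v 2 + yc v 3"
  using split_closure_P_U_zsum[OF assms] split_closure_P_U_zrow[OF assms, of 1]
    split_closure_P_U_zrow[OF assms, of 2] split_closure_P_U_zrow[OF assms, of 3]
  by (simp add: sum_3)

definition merge_z3 :: "real^(3 + 3 + (3 \<times> 3)) \<Rightarrow> real^(3 + 3 + (3 \<times> 2))" where
  "merge_z3 v = (\<chi> k. case k of
      Inr (Inr (i, j)) \<Rightarrow> zc v i (if j = 1 then 1 else 2) + zc v i 3
    | Inr (Inl i) \<Rightarrow> yc v i
    | Inl i \<Rightarrow> xc v i)"

definition merge_z3_dual :: "real^(3 + 3 + (3 \<times> 2)) \<Rightarrow> real^(3 + 3 + (3 \<times> 3))" where
  "merge_z3_dual \<pi> = (\<chi> k. case k of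
      Inr (Inr (i, j)) \<Rightarrow> (if j = 3 then zc \<pi> i 1 + zc \<pi> i 2 else zc \<pi> i (if j = 1 then 1 else 2))
    | Inr (Inl i) \<Rightarrow> yc \<pi> i
    | Inl i \<Rightarrow> xc \<pi> i)"

lemma inner_merge_z3: "\<pi> \<bullet> merge_z3 v = merge_z3_dual \<pi> \<bullet> v"
  unfolding inner_xyz
  by (simp add: merge_z3_def merge_z3_dual_def xc_def yc_def zc_def sum_3 sum_2 algebra_simps)

lemma integral_merge_z3_dual: "integral_vec \<pi> \<Longrightarrow> integral_vec (merge_z3_dual \<pi>)"
  unfolding integral_vec_def merge_z3_dual_def xc_def yc_def zc_def
  by (auto split: sum.split)

lemma linear_merge_z3: "linear merge_z3"
  by (rule linearI) (auto simp: vec_eq_iff merge_z3_def xc_def yc_def zc_def algebra_simps split: sum.split)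

lemma merge_z3_P_U: "merge_z3 ` P_U \<subseteq> P_Lplus"
  unfolding P_U_def P_Lplus_def inP_def merge_z3_def xc_def yc_def zc_def
  by (auto simp: forall_3 forall_2)

lemma proj_xy_merge_z3: "proj_xy (merge_z3 v) = proj_xy v"
  unfolding proj_xy_def merge_z3_def xc_def yc_def by (simp add: vec_eq_iff split: sum.split)

lemma merge_z3_split_closure: "merge_z3 ` split_closure P_U \<subseteq> split_closure P_Lplus"
  using linear_merge_z3 merge_z3_P_U
  by (rule linear_image_split_closure) (use integral_merge_z3_dual inner_merge_z3 in blast)

(* Solves x\<^sub>i = z\<^sub>i\<^sub>1 + 2 z\<^sub>i\<^sub>2 and x\<^sub>1 + x\<^sub>2 + x\<^sub>3 = 4 affinely in y. *)
definition lplus_point :: "(3 \<Rightarrow> real) \<Rightarrow> real^(3 + 3 + (3 \<times> 2))" where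
  "lplus_point y = (\<chi> k. case k of
      Inl i \<Rightarrow>
        (if i = 1 then 1 + 3 * y 1 - y 2 - y 3
         else if i = 2 then 1 - y 1 + 3 * y 2 - y 3
         else 2 - 2 * y 1 - 2 * y 2 + 2 * y 3)
    | Inr (Inl i) \<Rightarrow> y i
    | Inr (Inr (i, j)) \<Rightarrow>
        (if j = 1 then (if i = 3 then 0 else y 1 + y 2 + y 3 - 1)
         else if i = 1 then 1 + y 1 - y 2 - y 3
         else if i = 2 then 1 - y 1 + y 2 - y 3
         else 1 - y 1 - y 2 + y 3))"

definition lplus_dir :: "3 \<Rightarrow> real^(3 + 3 + (3 \<times> 2))" where
  "lplus_dir i = lplus_point (\<lambda>j. if j = i then 1 else 0) - lplus_point (\<lambda>_. 0)"

lemma integral_lplus_point: "(\<And>i. y i \<in> \<int>) \<Longrightarrow> integral_vec (lplus_point y)"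
  unfolding integral_vec_def lplus_point_def by (auto split: sum.split)

lemma integral_lplus_dir: "integral_vec (lplus_dir i)"
  unfolding lplus_dir_def by (intro integral_vec_diff integral_lplus_point) auto

lemma lplus_point_face_centre_mem:
  "t \<in> {0, 1/2, 1} \<Longrightarrow> lplus_point (\<lambda>j. if j = i then t else 1/2) \<in> P_Lplus"
  using exhaust_3[of i]
  unfolding P_Lplus_def inP_def xc_def yc_def zc_def lplus_point_def
  by (auto simp: forall_3 forall_2)

lemma lplus_point_centre:
  "lplus_point (\<lambda>_. 1/2) = lplus_point (\<lambda>_. 0) + (1/2) *\<^sub>R (\<Sum>i\<in>UNIV. lplus_dir i)"
  unfolding lplus_dir_def sum_3 using exhaust_3
  by (auto simp: vec_eq_iff lplus_point_def split: sum.split)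

lemma lplus_point_face_centres:
  "lplus_point (\<lambda>_. 1/2) - (1/2) *\<^sub>R lplus_dir i = lplus_point (\<lambda>j. if j = i then 0 else 1/2)"
  "lplus_point (\<lambda>_. 1/2) + (1/2) *\<^sub>R lplus_dir i = lplus_point (\<lambda>j. if j = i then 1 else 1/2)"
  using exhaust_3[of i]
  by (auto simp: vec_eq_iff lplus_dir_def lplus_point_def split: sum.split)

lemma lplus_centre_split_closure: "lplus_point (\<lambda>_. 1/2) \<in> split_closure P_Lplus"
proof (rule centre_mem_split_closure[OF lplus_point_centre])
  show "integral_vec (lplus_point (\<lambda>_. 0))" by (rule integral_lplus_point) simp
  show "integral_vec (lplus_dir i)" for i by (rule integral_lplus_dir)
  show "lplus_point (\<lambda>_. 1/2) \<in> P_Lplus"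
    using lplus_point_face_centre_mem[of "1/2" 1] by simp
  show "lplus_point (\<lambda>_. 1/2) - (1/2) *\<^sub>R lplus_dir i \<in> P_Lplus"
       "lplus_point (\<lambda>_. 1/2) + (1/2) *\<^sub>R lplus_dir i \<in> P_Lplus" for i
    unfolding lplus_point_face_centres by (auto intro: lplus_point_face_centre_mem)
qed

theorem theorem5:
  shows "proj_xy ` split_closure P_U \<subset> proj_xy ` split_closure P_Lplus"
proof
  show "proj_xy ` split_closure P_U \<subseteq> proj_xy ` split_closure P_Lplus"
    using merge_z3_split_closure by (force simp flip: proj_xy_merge_z3)
  define q where "q = lplus_point (\<lambda>_. 1/2)"
  have "yc q 1 + yc q 2 + yc q 3 = 3/2"
    by (simp add: q_def yc_def lplus_point_def)
  moreover have "yc v i = yc q i" if "proj_xy v = proj_xy q" for v :: "real^(3 + 3 + (3 \<times> 3))" and i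
    using arg_cong[OF that, of "\<lambda>u. u $ Inr i"] by (simp add: proj_xy_def)
  ultimately have "proj_xy q \<notin> proj_xy ` split_closure P_U"
    using split_closure_P_U_ysum by force
  moreover have "proj_xy q \<in> proj_xy ` split_closure P_Lplus"
    using lplus_centre_split_closure by (simp add: q_def)
  ultimately show "proj_xy ` split_closure P_U \<noteq> proj_xy ` split_closure P_Lplus"
    by blast
qed

end
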